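(* Let $t,n,k\ge1$ and $d\ge 0$ be integers with $(d+1)\mid t$. Every $d$-runlength constrained $k$-disjunct binary $t\times n$ matrix satisfies $t\ge\min(n,\,1+k(d+1))$.
   Context: A binary $t\times n$ matrix $M$ is $d$-runlength constrained if in every column, any two $1$'s are separated by a run of at least $d$ zeros, i.e. $M_{ij}=M_{i'j}=1$ with $i<i'$ implies $i'-i\ge d+1$. A binary matrix $M$ is $k$-disjunct if for every column $j$ and every set $S$ of at most $k$ columns with $j\notin S$, $\mathsf{supp}(M_{\cdot j})\not\subseteq\bigcup_{j'\in S}\mathsf{supp}(M_{\cdot j'})$, where $\mathsf{supp}$ denotes the support. *)

theory Defs
  imports Main
begin

text \<open>A binary t x n matrix is represented as M :: nat => nat => bool, where M i j
  (row i < t, column j < n) is true iff the entry is 1. Entries outside the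
  range are ignored.\<close>

definition col_supp :: "nat \<Rightarrow> (nat \<Rightarrow> nat \<Rightarrow> bool) \<Rightarrow> nat \<Rightarrow> nat set" where
  "col_supp t M j = {i. i < t \<and> M i j}"

definition runlength_constrained :: "nat \<Rightarrow> nat \<Rightarrow> (nat \<Rightarrow> nat \<Rightarrow> bool) \<Rightarrow> nat \<Rightarrow> bool" where
  "runlength_constrained t n M d \<longleftrightarrow>
     (\<forall>j<n. \<forall>i<t. \<forall>i'<t. M i j \<and> M i' j \<and> i < i' \<longrightarrow> i' - i \<ge> d + 1)"

definition disjunct :: "nat \<Rightarrow> nat \<Rightarrow> (nat \<Rightarrow> nat \<Rightarrow> bool) \<Rightarrow> nat \<Rightarrow> bool" where
  "disjunct t n M k \<longleftrightarrow>
     (\<forall>j<n. \<forall>S. S \<subseteq> {0..<n} \<and> card S \<le> k \<and> j \<notin> S \<longrightarrow>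
        \<not> (col_supp t M j \<subseteq> (\<Union>j'\<in>S. col_supp t M j')))"

end

theory Submission
  imports Defs
begin

text \<open>Two ones of a d-runlength constrained column lie in different blocks of d + 1
  consecutive rows, so a column has at most t / (d + 1) ones. If t \<le> k (d + 1), every
  column therefore has at most k ones; covering each of them by some other column would
  contradict k-disjunctness, so every column owns a row where no other column has a one.
  These private rows are distinct, whence n \<le> t.\<close>

lemma runlength_constrained_inj_on_div:
  assumes "runlength_constrained t n M d" "j < n"
  shows "inj_on (\<lambda>i. i div (d + 1)) (col_supp t M j)"
proof (rule inj_onI)
  fix x y assume x: "x \<in> col_supp t M j" and y: "y \<in> col_supp t M j"
    and same_block: "x div (d + 1) = y div (d + 1)"
  have "x mod (d + 1) < d + 1" "y mod (d + 1) < d + 1" by auto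
  moreover have "x = x div (d + 1) * (d + 1) + x mod (d + 1)"
    and "y = x div (d + 1) * (d + 1) + y mod (d + 1)"
    by (metis div_mult_mod_eq, metis same_block div_mult_mod_eq)
  moreover have "x < y \<Longrightarrow> y - x \<ge> d + 1" "y < x \<Longrightarrow> x - y \<ge> d + 1"
    using x y assms unfolding runlength_constrained_def col_supp_def by auto
  ultimately show "x = y" by linarith
qed

lemma card_col_supp_le_div:
  assumes "runlength_constrained t n M d" "j < n" "(d + 1) dvd t"
  shows "card (col_supp t M j) \<le> t div (d + 1)"
proof -
  obtain q where t: "t = q * (d + 1)"
    using assms(3) by (metis dvdE mult.commute)
  have "(\<lambda>i. i div (d + 1)) ` col_supp t M j \<subseteq> {..<q}"
  proof
    fix b assume "b \<in> (\<lambda>i. i div (d + 1)) ` col_supp t M j"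
    then obtain i where "i < q * (d + 1)" "b = i div (d + 1)"
      unfolding col_supp_def t by blast
    then show "b \<in> {..<q}"
      by (simp add: less_mult_imp_div_less)
  qed
  moreover have "t div (d + 1) = q"
    unfolding t by (rule nonzero_mult_div_cancel_right) simp
  ultimately have "card ((\<lambda>i. i div (d + 1)) ` col_supp t M j) \<le> t div (d + 1)"
    by (metis card_lessThan card_mono finite_lessThan)
  then show ?thesis
    using runlength_constrained_inj_on_div[OF assms(1,2)] by (simp add: card_image)
qed

lemma disjunct_private_row:
  assumes "disjunct t n M k" "j < n" "card (col_supp t M j) \<le> k"
  shows "\<exists>i<t. M i j \<and> (\<forall>j'<n. j' \<noteq> j \<longrightarrow> \<not> M i j')"
proof (rule ccontr)
  assume "\<not> ?thesis"
  then have "\<forall>i\<in>col_supp t M j. \<exists>j'. j' < n \<and> j' \<noteq> j \<and> M i j'"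
    unfolding col_supp_def by auto
  from bchoice[OF this]
  obtain f where f: "\<forall>i\<in>col_supp t M j. f i < n \<and> f i \<noteq> j \<and> M i (f i)" ..
  define S where "S = f ` col_supp t M j"
  have "card S \<le> k"
    unfolding S_def using assms(3) card_image_le[of "col_supp t M j" f]
    by (simp add: col_supp_def)
  moreover have "S \<subseteq> {0..<n}" "j \<notin> S"
    using f unfolding S_def by auto
  moreover have "col_supp t M j \<subseteq> (\<Union>j'\<in>S. col_supp t M j')"
  proof
    fix i assume i: "i \<in> col_supp t M j"
    then have "i \<in> col_supp t M (f i)"
      using f i unfolding col_supp_def by auto
    then show "i \<in> (\<Union>j'\<in>S. col_supp t M j')"
      using i unfolding S_def by blast
  qed
  ultimately show False
    using assms(1,2) unfolding disjunct_def by blast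
qed

lemma private_rows_imp_le:
  fixes n t :: nat
  assumes "\<And>j. j < n \<Longrightarrow> \<exists>i<t. M i j \<and> (\<forall>j'<n. j' \<noteq> j \<longrightarrow> \<not> M i j')"
  shows "n \<le> t"
proof -
  obtain g where g: "\<And>j. j < n \<Longrightarrow> g j < t \<and> M (g j) j \<and> (\<forall>j'<n. j' \<noteq> j \<longrightarrow> \<not> M (g j) j')"
    using assms by metis
  have "inj_on g {0..<n}"
    by (rule inj_onI) (metis atLeastLessThan_iff g)
  moreover have "g ` {0..<n} \<subseteq> {0..<t}"
    using g by auto
  ultimately have "card {0..<n} \<le> card {0..<t}"
    by (metis card_inj_on_le finite_atLeastLessThan)
  then show ?thesis by simp
qed

theorem lemma1:
  fixes t n k d :: nat and M :: "nat \<Rightarrow> nat \<Rightarrow> bool"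
  assumes "t \<ge> 1" "n \<ge> 1" "k \<ge> 1"
    and "(d + 1) dvd t"
    and "runlength_constrained t n M d"
    and "disjunct t n M k"
  shows "t \<ge> min n (1 + k * (d + 1))"
proof (rule ccontr)
  assume "\<not> ?thesis"
  then have "t < n" and "t \<le> k * (d + 1)" by auto
  then have "t div (d + 1) \<le> k"
    by (metis div_le_mono nonzero_mult_div_cancel_right add_eq_0_iff_both_eq_0 one_neq_zero)
  then have few_ones: "card (col_supp t M j) \<le> k" if "j < n" for j
    using card_col_supp_le_div[OF assms(5) that assms(4)] by linarith
  have "n \<le> t"
  proof (rule private_rows_imp_le[where M = M])
    fix j assume "j < n"
    then show "\<exists>i<t. M i j \<and> (\<forall>j'<n. j' \<noteq> j \<longrightarrow> \<not> M i j')"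
      using few_ones by (intro disjunct_private_row[OF assms(6)])
  qed
  with \<open>t < n\<close> show False by simp
qed

end
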